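(* Let $C_n(a,b)$ be a connected $2$-regular circulant digraph, let $l\ge1$, $0\le k\le l$ with $la+k(b-a)=\omega n$ for an integer $\omega$, and let $Q$ be the set of positive divisors of $\gcd(l,k)$ that are coprime with $\omega$. Then $$|\mathcal{P}_{l,k}(C_n(a,b))|=\frac{n}{l}\sum_{q\in Q}\ \sum_{m\mid \gcd(l,k)/q}\mu(m)\binom{l/(qm)}{k/(qm)},$$ where $\mu$ is the Möbius function.
   Context: Let $n\ge 2$ and $0<a<b<n$ be integers; $C_n(a,b)$ is connected iff $\gcd(n,a,b)=1$. $C_n(a,b)$ has vertex set $\mathbb{Z}_n$ and directed bonds $(v,v+a)$, $(v,v+b)$ (addition mod $n$), with step sizes $a$, $b$. A path of length $l$ is a sequence of bonds $(e_1,\dots,e_l)$ with the terminus of $e_j$ equal to the origin of $e_{j+1}$; its $b$-count is the number of bonds of step size $b$; a circuit is a path whose last terminus equals its first origin. A periodic orbit is an equivalence class of circuits under cyclic rotation $(e_1,\dots,e_l)\mapsto(e_2,\dots,e_l,e_1)$; it is primitive if it is not $[c_0^r]$ for a circuit $c_0$ and $r>1$ ($c_0^r$ = concatenation of $r$ copies). $\mathcal{P}_{l,k}(C_n(a,b))$ is the set of primitive periodic orbits of length $l$ and $b$-count $k$. *)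

theory Defs
  imports Main "HOL-Computational_Algebra.Computational_Algebra"
begin

definition moebius_mu :: "nat \<Rightarrow> int" where
  "moebius_mu m = (if squarefree m then (-1) ^ card (prime_factors m) else 0)"

(* Vertices of C_n(a,b): {0..<n} representing Z_n.  A bond is a pair (origin, terminus). *)
type_synonym bond = "nat \<times> nat"

definition bonds :: "nat \<Rightarrow> nat \<Rightarrow> nat \<Rightarrow> bond set" where
  "bonds n a b = {(v, (v + a) mod n) | v. v < n} \<union> {(v, (v + b) mod n) | v. v < n}"

definition is_b_bond :: "nat \<Rightarrow> nat \<Rightarrow> bond \<Rightarrow> bool" where
  "is_b_bond n b e \<longleftrightarrow> snd e = (fst e + b) mod n"

definition b_count :: "nat \<Rightarrow> nat \<Rightarrow> bond list \<Rightarrow> nat" where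
  "b_count n b c = length (filter (is_b_bond n b) c)"

definition is_path :: "nat \<Rightarrow> nat \<Rightarrow> nat \<Rightarrow> bond list \<Rightarrow> bool" where
  "is_path n a b c \<longleftrightarrow> c \<noteq> [] \<and> set c \<subseteq> bonds n a b \<and>
     (\<forall>j. Suc j < length c \<longrightarrow> snd (c ! j) = fst (c ! Suc j))"

definition is_circuit :: "nat \<Rightarrow> nat \<Rightarrow> nat \<Rightarrow> bond list \<Rightarrow> bool" where
  "is_circuit n a b c \<longleftrightarrow> is_path n a b c \<and> snd (last c) = fst (hd c)"

(* periodic orbit of a circuit: its class under cyclic rotation *)
definition orbit :: "bond list \<Rightarrow> bond list set" where
  "orbit c = {rotate i c | i. True}"

definition primitive_orbit :: "nat \<Rightarrow> nat \<Rightarrow> nat \<Rightarrow> bond list set \<Rightarrow> bool" where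
  "primitive_orbit n a b Orb \<longleftrightarrow>
     \<not> (\<exists>c0 r. r > 1 \<and> is_circuit n a b c0 \<and> Orb = orbit (concat (replicate r c0)))"

definition prim_orbits :: "nat \<Rightarrow> nat \<Rightarrow> nat \<Rightarrow> nat \<Rightarrow> nat \<Rightarrow> bond list set set" where
  "prim_orbits n a b l k = {Orb. \<exists>c. is_circuit n a b c \<and> length c = l \<and> b_count n b c = k
        \<and> Orb = orbit c \<and> primitive_orbit n a b Orb}"

end

theory Submission
  imports Defs
begin

text \<open>
  A circuit of length l is determined by its origin v and by its word w in {a,b}^l of steps;
  when w has k letters b the walk is displaced by la + k(b - a) = \<omega>n, so every such walk
  closes up. The orbit of a circuit is primitive iff no proper rotation fixes the circuit,
  and then it consists of exactly l circuits. Write w as the e-th power of a primitive word,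
  e being the exponent of w. A rotation by l/t fixes the walk iff it fixes w and the walk
  along one period w' already closes; as the displacement of w is t times that of w', this
  happens iff t divides both e and \<omega>. So the primitive orbits are n/l times as many as the
  words whose exponent is coprime to \<omega>, and the words of exponent q are counted by Moebius
  inversion from the binomial number of words of exponent divisible by qm.
\<close>

section \<open>The Moebius function\<close>

lemma sum_Pow_neg_one_power_card:
  assumes "finite A" "A \<noteq> {}"
  shows "(\<Sum>S\<in>Pow A. (-1) ^ card S) = (0 :: int)"
proof (rule sum_alternating_cancels)
  have "{} \<subset> A" using assms(2) by blast
  then show "card {S. S \<in> Pow A \<and> even (card S)} = card {S. S \<in> Pow A \<and> odd (card S)}"
    using card_subsupersets_even_odd[OF assms(1) \<open>{} \<subset> A\<close>] by simp
qed (use assms in simp)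

lemma squarefree_prod_primes:
  fixes S :: "nat set"
  assumes "finite S" "\<forall>p\<in>S. prime p"
  shows "squarefree (\<Prod>S)" "prime_factors (\<Prod>S) = S"
proof -
  show "squarefree (\<Prod>S)"
    using assms by (intro squarefree_prod_coprime) (auto intro: primes_coprime squarefree_prime)
  have "0 \<notin> id ` S" using assms by auto
  then have "prime_factors (prod id S) = \<Union>((prime_factors \<circ> id) ` S)"
    using prime_factors_prod[of S id] assms by simp
  also have "\<dots> = S" using assms by (auto simp: prime_factorization_prime)
  finally show "prime_factors (\<Prod>S) = S" by simp
qed

lemma prod_prime_factors_squarefree:
  fixes m :: nat
  assumes "squarefree m"
  shows "\<Prod>(prime_factors m) = m"
proof -
  have "m \<noteq> 0" using assms by (cases "m = 0") auto
  then have "(\<Prod>p\<in>prime_factors m. p ^ multiplicity p m) = m" by (simp add: prod_prime_factors)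
  moreover have "(\<Prod>p\<in>prime_factors m. p ^ multiplicity p m) = (\<Prod>p\<in>prime_factors m. p)"
    using assms \<open>m \<noteq> 0\<close> by (intro prod.cong) (auto simp: squarefree_factorial_semiring')
  ultimately show ?thesis by simp
qed

lemma prod_subset_prime_factors_dvd:
  fixes N :: nat
  assumes "0 < N" "S \<subseteq> prime_factors N"
  shows "\<Prod>S dvd N"
proof -
  have "\<Prod>S dvd (\<Prod>p\<in>S. p ^ multiplicity p N)"
  proof (rule prod_dvd_prod)
    fix p assume "p \<in> S"
    then have "multiplicity p N \<ge> 1" using assms by (auto simp: prime_factors_multiplicity)
    then show "p dvd p ^ multiplicity p N" by simp
  qed
  also have "\<dots> dvd (\<Prod>p\<in>prime_factors N. p ^ multiplicity p N)"
    using assms by (intro prod_dvd_prod_subset) auto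
  also have "\<dots> = N" using prod_prime_factors[of N] assms by simp
  finally show ?thesis .
qed

lemma sum_moebius_mu_divisors:
  fixes N :: nat
  assumes "0 < N"
  shows "(\<Sum>m | m dvd N. moebius_mu m) = (if N = 1 then 1 else 0)"
proof -
  have "(\<Sum>m | m dvd N. moebius_mu m) = (\<Sum>m | m dvd N \<and> squarefree m. moebius_mu m)"
    using assms by (intro sum.mono_neutral_right) (auto simp: moebius_mu_def)
  also have "\<dots> = (\<Sum>S\<in>Pow (prime_factors N). (-1) ^ card S)"
  proof (rule sum.reindex_bij_witness[where i = "\<lambda>S. \<Prod>S" and j = prime_factors])
    fix S assume S: "S \<in> Pow (prime_factors N)"
    then have "finite S" "\<forall>p\<in>S. prime p" by (auto intro: finite_subset)
    note prod_S = squarefree_prod_primes[OF this]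
    show "prime_factors (\<Prod>S) = S" by (rule prod_S(2))
    have "\<Prod>S dvd N" using S assms by (intro prod_subset_prime_factors_dvd) auto
    then show "\<Prod>S \<in> {m. m dvd N \<and> squarefree m}" using prod_S(1) by simp
  next
    fix m assume m: "m \<in> {m. m dvd N \<and> squarefree m}"
    then show "\<Prod>(prime_factors m) = m" by (simp add: prod_prime_factors_squarefree)
    show "prime_factors m \<in> Pow (prime_factors N)"
      using m assms by (auto intro: dvd_trans simp: prime_factors_dvd)
    show "(-1) ^ card (prime_factors m) = moebius_mu m" using m by (simp add: moebius_mu_def)
  qed
  also have "\<dots> = (if N = 1 then 1 else 0)"
  proof (cases "N = 1")
    case False
    then obtain p where "prime p" "p dvd N" using prime_factor_nat by blast
    then have "prime_factors N \<noteq> {}" using assms by (auto simp: prime_factors_dvd)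
    then have "(\<Sum>S\<in>Pow (prime_factors N). (-1) ^ card S) = (0 :: int)"
      by (intro sum_Pow_neg_one_power_card) simp_all
    then show ?thesis using False by simp
  qed simp
  finally show ?thesis .
qed

lemma moebius_inversion_divisors:
  fixes f :: "nat \<Rightarrow> 'a :: comm_ring_1"
  assumes "0 < N" "d dvd N"
  shows "(\<Sum>m | m dvd N div d. of_int (moebius_mu m) * (\<Sum>j | j dvd N \<and> d * m dvd j. f j)) = f d"
proof -
  have "0 < d" using assms by (auto intro: gr0I)
  have "0 < N div d" using assms \<open>0 < d\<close> by (simp add: div_greater_zero_iff dvd_imp_le)
  then have fin: "finite {m. m dvd N div d}" "finite {j. j dvd N}"
    using assms by simp_all
  have "(\<Sum>m | m dvd N div d. of_int (moebius_mu m) * (\<Sum>j | j dvd N \<and> d * m dvd j. f j)) =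
        (\<Sum>m\<in>{m. m dvd N div d}. \<Sum>j\<in>{j \<in> {j. j dvd N}. d * m dvd j}. of_int (moebius_mu m) * f j)"
    by (simp add: sum_distrib_left)
  also have "\<dots> = (\<Sum>j\<in>{j. j dvd N}. \<Sum>m\<in>{m \<in> {m. m dvd N div d}. d * m dvd j}. of_int (moebius_mu m) * f j)"
    using fin by (rule sum.swap_restrict)
  also have "\<dots> = (\<Sum>j\<in>{j. j dvd N}. if j = d then f j else 0)"
  proof (rule sum.cong)
    fix j assume j: "j \<in> {j. j dvd N}"
    show "(\<Sum>m\<in>{m \<in> {m. m dvd N div d}. d * m dvd j}. of_int (moebius_mu m) * f j) =
          (if j = d then f j else 0)"
    proof (cases "d dvd j")
      case True
      then obtain s where s: "j = d * s" ..
      then have "0 < s" using j assms by (auto intro: gr0I)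
      have "{m \<in> {m. m dvd N div d}. d * m dvd j} = {m. m dvd s}"
        using s j \<open>0 < d\<close> by (auto intro: dvd_trans)
      then have "(\<Sum>m\<in>{m \<in> {m. m dvd N div d}. d * m dvd j}. of_int (moebius_mu m) * f j)
          = of_int (\<Sum>m | m dvd s. moebius_mu m) * f j"
        by (simp add: sum_distrib_right)
      also have "\<dots> = (if j = d then f j else 0)"
        using sum_moebius_mu_divisors[OF \<open>0 < s\<close>] s \<open>0 < d\<close> by auto
      finally show ?thesis .
    next
      case False
      then have empty: "{m \<in> {m. m dvd N div d}. d * m dvd j} = {}"
        by (auto intro: dvd_mult_left)
      have "j \<noteq> d" using False by auto
      then show ?thesis by (simp only: empty sum.empty if_False)
    qed
  qed simp
  also have "\<dots> = f d" using assms fin by simp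
  finally show ?thesis .
qed

section \<open>Rotations and periods of lists\<close>

lemma inj_rotate: "inj (rotate n)"
  unfolding rotate_def by (rule inj_fn) (rule inj_rotate1)

lemma rotate_mult_eq_self: "rotate p xs = xs \<Longrightarrow> rotate (p * m) xs = xs"
  by (induction m) (simp_all add: rotate_rotate[symmetric] add.commute)

lemma rotate_gcd_eq_self:
  assumes "rotate p xs = xs" "rotate q xs = xs"
  shows "rotate (gcd p q) xs = xs"
proof (cases "p = 0")
  case True
  then show ?thesis using assms by simp
next
  case False
  then obtain x y where xy: "p * x = q * y + gcd p q" using bezout_nat by blast
  have "xs = rotate (p * x) xs" using rotate_mult_eq_self[OF assms(1)] by simp
  also have "\<dots> = rotate (gcd p q) (rotate (q * y) xs)" by (simp add: xy rotate_rotate add.commute)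
  finally show ?thesis using rotate_mult_eq_self[OF assms(2)] by simp
qed

text \<open>
  The least rotation fixing a nonempty list is the length of its primitive root, and the
  list is the \<open>list_exponent\<close>-th power of that root.
\<close>

definition list_period :: "'a list \<Rightarrow> nat" where
  "list_period xs = (LEAST p. 0 < p \<and> rotate p xs = xs)"

definition list_exponent :: "'a list \<Rightarrow> nat" where
  "list_exponent xs = length xs div list_period xs"

lemma list_period:
  assumes "xs \<noteq> []"
  shows "0 < list_period xs" "rotate (list_period xs) xs = xs"
proof -
  have "0 < length xs \<and> rotate (length xs) xs = xs" using assms by simp
  then have "0 < list_period xs \<and> rotate (list_period xs) xs = xs"
    unfolding list_period_def by (rule LeastI)
  then show "0 < list_period xs" "rotate (list_period xs) xs = xs" by auto
qed

lemma rotate_eq_self_iff_period_dvd: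
  assumes "xs \<noteq> []"
  shows "rotate p xs = xs \<longleftrightarrow> list_period xs dvd p"
proof
  assume "rotate p xs = xs"
  then have g: "rotate (gcd (list_period xs) p) xs = xs"
    using rotate_gcd_eq_self list_period(2)[OF assms] by blast
  have "0 < gcd (list_period xs) p" using list_period(1)[OF assms] by simp
  then have "list_period xs \<le> gcd (list_period xs) p"
    using g unfolding list_period_def by (intro Least_le) simp
  then have "list_period xs = gcd (list_period xs) p"
    using list_period(1)[OF assms] by (simp add: antisym)
  then show "list_period xs dvd p" by (metis gcd_dvd2)
next
  assume "list_period xs dvd p"
  then show "rotate p xs = xs" using rotate_mult_eq_self[OF list_period(2)[OF assms]] by auto
qed

lemma list_period_dvd_length: "xs \<noteq> [] \<Longrightarrow> list_period xs dvd length xs"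
  using rotate_eq_self_iff_period_dvd[of xs "length xs"] by simp

lemma list_period_mult_exponent: "xs \<noteq> [] \<Longrightarrow> list_period xs * list_exponent xs = length xs"
  by (simp add: list_exponent_def list_period_dvd_length)

lemma list_exponent_pos: "xs \<noteq> [] \<Longrightarrow> 0 < list_exponent xs"
  by (simp add: list_exponent_def div_greater_zero_iff dvd_imp_le list_period_dvd_length list_period)

lemma list_exponent_dvd_length: "list_exponent xs dvd length xs"
  using list_period_dvd_length[of xs] list_period(1)[of xs]
  by (cases "xs = []") (auto simp: list_exponent_def)

lemma rotate_eq_self_iff_dvd_exponent:
  assumes "xs \<noteq> []" "t dvd length xs"
  shows "rotate (length xs div t) xs = xs \<longleftrightarrow> t dvd list_exponent xs"
proof -
  obtain e where e: "length xs = list_period xs * e" using list_period_dvd_length[OF assms(1)] ..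
  obtain s where s: "length xs = t * s" using assms(2) ..
  have "0 < list_period xs" "0 < t" using list_period(1) assms s by (auto intro: gr0I)
  then have "list_period xs dvd s \<longleftrightarrow> t * list_period xs dvd t * s"
    by simp
  also have "\<dots> \<longleftrightarrow> list_period xs * t dvd list_period xs * e"
    using e s by (simp add: mult.commute)
  also have "\<dots> \<longleftrightarrow> t dvd e" using \<open>0 < list_period xs\<close> by simp
  finally have "list_period xs dvd s \<longleftrightarrow> t dvd e" .
  moreover have "list_exponent xs = e"
    using \<open>0 < list_period xs\<close> unfolding list_exponent_def e by simp
  moreover have "length xs div t = s"
    using \<open>0 < t\<close> unfolding s by simp
  ultimately show ?thesis using rotate_eq_self_iff_period_dvd[OF assms(1)] by simp
qed

lemma list_exponent_rotate: "list_exponent (rotate i xs) = list_exponent xs"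
proof -
  have "rotate p (rotate i xs) = rotate i (rotate p xs)" for p
    by (simp add: rotate_rotate add.commute)
  then have "rotate p (rotate i xs) = rotate i xs \<longleftrightarrow> rotate p xs = xs" for p
    using inj_rotate by (metis injD)
  then show ?thesis by (simp add: list_exponent_def list_period_def)
qed

lemma rotate_length_concat_replicate:
  "rotate (length u) (concat (replicate r u)) = concat (replicate r u)"
proof (cases r)
  case (Suc r')
  have "rotate (length u) (u @ concat (replicate r' u)) = concat (replicate r' u) @ u"
    by (rule rotate_append)
  also have "\<dots> = u @ concat (replicate r' u)"
    by (induction r') simp_all
  finally show ?thesis using Suc by simp
qed simp

lemma nth_concat_replicate:
  "i < r * length u \<Longrightarrow> concat (replicate r u) ! i = u ! (i mod length u)"
proof (induction r arbitrary: i)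
  case (Suc r)
  then show ?case
    by (cases "i < length u") (auto simp: nth_append le_mod_geq)
qed simp

lemma rotate_eq_self_imp_concat_replicate:
  assumes "rotate d xs = xs" "0 < d" "d dvd length xs"
  shows "xs = concat (replicate (length xs div d) (take d xs))"
proof (cases "xs = []")
  case False
  then have "d \<le> length xs" using assms(3) by (simp add: dvd_imp_le)
  then have len: "length (take d xs) = d" by simp
  show ?thesis
  proof (rule nth_equalityI)
    show "length xs = length (concat (replicate (length xs div d) (take d xs)))"
      using len assms(3) by (simp add: length_concat sum_list_replicate)
    fix i assume i: "i < length xs"
    have "xs ! (i mod d) = rotate (d * (i div d)) xs ! (i mod d)"
      using rotate_mult_eq_self[OF assms(1)] by simp
    also have "\<dots> = xs ! i"
      using i \<open>d \<le> length xs\<close> assms(2) by (simp add: nth_rotate less_le_trans[of _ d])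
    finally show "xs ! i = concat (replicate (length xs div d) (take d xs)) ! i"
      using i len assms by (simp add: nth_concat_replicate)
  qed
qed simp

lemma dvd_list_exponent_concat_replicate:
  assumes "0 < r" "u \<noteq> []"
  shows "r dvd list_exponent (concat (replicate r u))"
proof -
  let ?xs = "concat (replicate r u)"
  have len: "length ?xs = r * length u" by (simp add: length_concat sum_list_replicate)
  then have "?xs \<noteq> []" "length ?xs div r = length u" using assms by auto
  then show ?thesis
    using rotate_eq_self_iff_dvd_exponent[of ?xs r] rotate_length_concat_replicate[of u r] len by simp
qed

lemma count_list_concat_replicate:
  "count_list (concat (replicate r u)) x = r * count_list u x"
  by (induction r) simp_all

lemma list_exponent_dvd_count_list: "list_exponent xs dvd count_list xs x"
proof (cases "xs = []")
  case False
  then have "xs = concat (replicate (list_exponent xs) (take (list_period xs) xs))"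
    unfolding list_exponent_def
    by (intro rotate_eq_self_imp_concat_replicate list_period list_period_dvd_length)
  then have "count_list xs x = list_exponent xs * count_list (take (list_period xs) xs) x"
    by (metis count_list_concat_replicate)
  then show ?thesis by simp
qed simp

section \<open>Orbits under rotation\<close>

lemma rotate_rotate_back: "rotate (length xs * i - i) (rotate i xs) = xs"
proof (cases "xs = []")
  case False
  then have "i \<le> length xs * i" by (cases xs) auto
  then show ?thesis by (simp add: rotate_rotate)
qed simp

lemma self_in_orbit: "c \<in> orbit c"
  unfolding orbit_def by (intro CollectI exI[of _ 0]) simp

lemma orbit_subset: "c' \<in> orbit c \<Longrightarrow> orbit c' \<subseteq> orbit c"
  by (auto simp: orbit_def rotate_rotate)

lemma orbit_rotate: "orbit (rotate i c) = orbit c"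
proof (rule equalityI; rule orbit_subset)
  show "rotate i c \<in> orbit c" by (auto simp: orbit_def)
  show "c \<in> orbit (rotate i c)"
    unfolding orbit_def using rotate_rotate_back[of c i]
    by (intro CollectI exI[of _ "length c * i - i"]) simp
qed

lemma orbit_eq_if_mem:
  assumes "c' \<in> orbit c"
  shows "orbit c' = orbit c"
proof -
  obtain i where "c' = rotate i c" using assms by (auto simp: orbit_def)
  then show ?thesis by (simp add: orbit_rotate)
qed

lemma card_orbit:
  assumes "c \<noteq> []" "list_exponent c = 1"
  shows "card (orbit c) = length c"
proof -
  have period: "list_period c = length c"
    using list_period_mult_exponent[OF assms(1)] assms(2) by simp
  have "rotate i c \<in> (\<lambda>i. rotate i c) ` {..<length c}" for i
    using assms(1) rotate_conv_mod[of i c] by (intro image_eqI[of _ _ "i mod length c"]) auto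
  then have orbit: "orbit c = (\<lambda>i. rotate i c) ` {..<length c}"
    by (auto simp: orbit_def)
  have eq: "i = j" if "i \<le> j" "j < length c" "rotate i c = rotate j c" for i j
  proof -
    have "rotate i (rotate (j - i) c) = rotate i c"
      using that by (simp add: rotate_rotate)
    then have "rotate (j - i) c = c" using inj_rotate by (metis injD)
    then have "length c dvd j - i" using rotate_eq_self_iff_period_dvd[OF assms(1)] period by simp
    moreover have "j - i < length c" using that by simp
    ultimately show "i = j" using that by (auto dest: dvd_imp_le)
  qed
  have "inj_on (\<lambda>i. rotate i c) {..<length c}"
  proof (rule inj_onI)
    fix i j assume "i \<in> {..<length c}" "j \<in> {..<length c}" "rotate i c = rotate j c"
    then show "i = j" using eq[of i j] eq[of j i] by (cases "i \<le> j") auto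
  qed
  then show ?thesis unfolding orbit by (simp add: card_image)
qed

lemma card_orbits:
  assumes "finite A" "\<And>c. c \<in> A \<Longrightarrow> orbit c \<subseteq> A"
    and "\<And>c. c \<in> A \<Longrightarrow> c \<noteq> [] \<and> length c = l \<and> list_exponent c = 1"
  shows "l * card (orbit ` A) = card A"
proof -
  have union: "\<Union> (orbit ` A) = A"
    using assms(2) self_in_orbit by (intro equalityI UN_least) auto
  have "l * card (orbit ` A) = card (\<Union> (orbit ` A))"
  proof (rule card_partition)
    show "finite (orbit ` A)" "finite (\<Union> (orbit ` A))" using assms(1) union by simp_all
    show "card X = l" if "X \<in> orbit ` A" for X using that assms(3) card_orbit by auto
    show "X \<inter> Y = {}" if X: "X \<in> orbit ` A" and Y: "Y \<in> orbit ` A" and "X \<noteq> Y" for X Y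
    proof -
      obtain x y where "X = orbit x" "Y = orbit y" using X Y by blast
      then show ?thesis using \<open>X \<noteq> Y\<close> orbit_eq_if_mem by (metis disjoint_iff)
    qed
  qed
  then show ?thesis using union by simp
qed

section \<open>Binary words with a given number of letters\<close>

definition words :: "nat \<Rightarrow> nat \<Rightarrow> bool list set" where
  "words L K = {w. length w = L \<and> count_list w True = K}"

lemma finite_words: "finite (words L K)"
proof (rule finite_subset)
  show "words L K \<subseteq> {w. set w \<subseteq> UNIV \<and> length w = L}" by (auto simp: words_def)
qed (rule finite_lists_length_eq, simp)

lemma card_words: "card (words L K) = L choose K"
proof -
  let ?w = "\<lambda>S. map (\<lambda>i. i \<in> S) [0..<L]"
  have count: "count_list (?w S) True = card (S \<inter> {0..<L})" for S
    by (simp add: count_list_eq_length_filter filter_map comp_def distinct_length_filter Int_commute)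
  have "bij_betw ?w {S. S \<subseteq> {0..<L} \<and> card S = K} (words L K)"
  proof (rule bij_betw_imageI)
    show "inj_on ?w {S. S \<subseteq> {0..<L} \<and> card S = K}"
      by (rule inj_onI) (auto simp: list_eq_iff_nth_eq)
    show "?w ` {S. S \<subseteq> {0..<L} \<and> card S = K} = words L K"
    proof
      show "?w ` {S. S \<subseteq> {0..<L} \<and> card S = K} \<subseteq> words L K"
        using count by (auto simp: words_def Int_absorb2)
      show "words L K \<subseteq> ?w ` {S. S \<subseteq> {0..<L} \<and> card S = K}"
      proof
        fix w assume w: "w \<in> words L K"
        let ?S = "{i. i < L \<and> w ! i}"
        have w_eq: "w = ?w ?S" using w by (simp add: words_def list_eq_iff_nth_eq)
        moreover have "card ?S = K"
          using count[of ?S] w w_eq by (simp add: words_def Int_absorb2 subset_eq)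
        then have "?S \<in> {S. S \<subseteq> {0..<L} \<and> card S = K}" by auto
        ultimately show "w \<in> ?w ` {S. S \<subseteq> {0..<L} \<and> card S = K}" by (rule image_eqI)
      qed
    qed
  qed
  then show ?thesis using n_subsets[of "{0..<L}" K] by (simp add: bij_betw_same_card Collect_conj_eq)
qed

lemma list_exponent_dvd_gcd: "w \<in> words L K \<Longrightarrow> list_exponent w dvd gcd L K"
  using list_exponent_dvd_length[of w] list_exponent_dvd_count_list[of w True]
  by (simp add: words_def)

lemma card_words_dvd_list_exponent:
  assumes "0 < L" "q dvd gcd L K"
  shows "card {w \<in> words L K. q dvd list_exponent w} = (L div q) choose (K div q)"
proof -
  let ?pow = "\<lambda>u. concat (replicate q u)"
  have "q dvd L" "q dvd K" "0 < q" using assms by (auto intro: gr0I)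
  then obtain r where r: "L = q * r" by blast
  then have "0 < r" using assms(1) by (auto intro: gr0I)
  then have "0 < L div q" "L div q dvd L" "L div (L div q) = q" using r \<open>0 < q\<close> by simp_all
  have img: "?pow ` words (L div q) (K div q) = {w \<in> words L K. q dvd list_exponent w}"
  proof
    show "?pow ` words (L div q) (K div q) \<subseteq> {w \<in> words L K. q dvd list_exponent w}"
    proof
      fix w assume "w \<in> ?pow ` words (L div q) (K div q)"
      then obtain u where u: "u \<in> words (L div q) (K div q)" "w = ?pow u" by blast
      then have "u \<noteq> []" using \<open>0 < L div q\<close> by (auto simp: words_def)
      then show "w \<in> {w \<in> words L K. q dvd list_exponent w}"
        using u \<open>q dvd L\<close> \<open>q dvd K\<close> \<open>0 < q\<close> dvd_list_exponent_concat_replicate[of q u]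
        by (simp add: words_def length_concat sum_list_replicate count_list_concat_replicate)
    qed
    show "{w \<in> words L K. q dvd list_exponent w} \<subseteq> ?pow ` words (L div q) (K div q)"
    proof
      fix w assume w: "w \<in> {w \<in> words L K. q dvd list_exponent w}"
      then have len: "length w = L" and "w \<noteq> []" using assms(1) by (auto simp: words_def)
      then have "rotate (L div q) w = w"
        using rotate_eq_self_iff_dvd_exponent[of w q] w \<open>q dvd L\<close> by simp
      then have w_eq: "w = ?pow (take (L div q) w)"
        using rotate_eq_self_imp_concat_replicate[of "L div q" w] len \<open>0 < L div q\<close>
          \<open>L div q dvd L\<close> \<open>L div (L div q) = q\<close> by simp
      have "count_list w True = q * count_list (take (L div q) w) True"
        using count_list_concat_replicate[of q "take (L div q) w" True] by (simp only: w_eq[symmetric])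
      then have "K = q * count_list (take (L div q) w) True" using w by (simp add: words_def)
      then have "take (L div q) w \<in> words (L div q) (K div q)"
        using len \<open>0 < q\<close> by (simp add: words_def)
      with w_eq show "w \<in> ?pow ` words (L div q) (K div q)" by (rule image_eqI)
    qed
  qed
  have inj: "inj_on ?pow (words (L div q) (K div q))"
  proof (rule inj_on_inverseI)
    fix u assume "u \<in> words (L div q) (K div q)"
    then show "take (L div q) (?pow u) = u"
      using \<open>0 < q\<close> by (cases q) (simp_all add: words_def)
  qed
  show ?thesis by (simp only: img[symmetric] card_image[OF inj] card_words)
qed

lemma card_words_dvd_list_exponent_sum:
  assumes "0 < L" "d dvd gcd L K"
  shows "card {w \<in> words L K. d dvd list_exponent w} =
    (\<Sum>j | j dvd gcd L K \<and> d dvd j. card {w \<in> words L K. list_exponent w = j})"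
proof -
  have "{w \<in> words L K. d dvd list_exponent w} =
      (\<Union>j \<in> {j. j dvd gcd L K \<and> d dvd j}. {w \<in> words L K. list_exponent w = j})"
    using list_exponent_dvd_gcd by auto
  moreover have "finite {j. j dvd gcd L K \<and> d dvd j}"
    using assms(1) by simp
  ultimately show ?thesis
    by (simp only:) (rule card_UN_disjoint, auto simp: finite_words)
qed

lemma card_words_list_exponent_eq:
  assumes "0 < L" "q dvd gcd L K"
  shows "real (card {w \<in> words L K. list_exponent w = q}) =
    (\<Sum>m | m dvd gcd L K div q.
       of_int (moebius_mu m) * real ((L div (q * m)) choose (K div (q * m))))"
proof -
  define f where "f j = real (card {w \<in> words L K. list_exponent w = j})" for j
  have "real ((L div (q * m)) choose (K div (q * m))) = (\<Sum>j | j dvd gcd L K \<and> q * m dvd j. f j)"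
    if "m dvd gcd L K div q" for m
  proof -
    have "q * m dvd q * (gcd L K div q)" using that by (rule mult_dvd_mono[OF dvd_refl])
    also have "\<dots> = gcd L K" using assms(2) by (rule dvd_mult_div_cancel)
    finally have qm: "q * m dvd gcd L K" .
    have "(L div (q * m)) choose (K div (q * m)) = card {w \<in> words L K. q * m dvd list_exponent w}"
      using card_words_dvd_list_exponent[OF assms(1) qm] by simp
    also have "\<dots> = (\<Sum>j | j dvd gcd L K \<and> q * m dvd j. card {w \<in> words L K. list_exponent w = j})"
      using assms(1) qm by (rule card_words_dvd_list_exponent_sum)
    finally show ?thesis by (simp add: f_def)
  qed
  then have "(\<Sum>m | m dvd gcd L K div q.
       of_int (moebius_mu m) * real ((L div (q * m)) choose (K div (q * m)))) =
      (\<Sum>m | m dvd gcd L K div q.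
       of_int (moebius_mu m) * (\<Sum>j | j dvd gcd L K \<and> q * m dvd j. f j))"
    by simp
  also have "\<dots> = f q" using assms by (intro moebius_inversion_divisors) auto
  finally show ?thesis by (simp add: f_def)
qed

lemma card_words_coprime_list_exponent:
  fixes \<omega> :: int
  assumes "0 < L"
  shows "real (card {w \<in> words L K. coprime (int (list_exponent w)) \<omega>}) =
    (\<Sum>q | 0 < q \<and> q dvd gcd L K \<and> coprime (int q) \<omega>.
       \<Sum>m | m dvd gcd L K div q.
         of_int (moebius_mu m) * real ((L div (q * m)) choose (K div (q * m))))"
proof -
  let ?Q = "{q. 0 < q \<and> q dvd gcd L K \<and> coprime (int q) \<omega>}"
  have "finite ?Q" using assms by (auto intro: finite_subset[of _ "{q. q dvd gcd L K}"])
  have "0 < list_exponent w" if "w \<in> words L K" for w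
    using that assms list_exponent_pos[of w] by (auto simp: words_def)
  then have "{w \<in> words L K. coprime (int (list_exponent w)) \<omega>} =
      (\<Union>q\<in>?Q. {w \<in> words L K. list_exponent w = q})"
    using list_exponent_dvd_gcd by auto
  then have "card {w \<in> words L K. coprime (int (list_exponent w)) \<omega>} =
      (\<Sum>q\<in>?Q. card {w \<in> words L K. list_exponent w = q})"
    using \<open>finite ?Q\<close> by (simp only:) (rule card_UN_disjoint, auto simp: finite_words)
  then show ?thesis
    using assms by (simp add: card_words_list_exponent_eq)
qed

section \<open>Circuits and primitive orbits\<close>

lemma is_circuit_iff_cyclic:
  "is_circuit n a b c \<longleftrightarrow> c \<noteq> [] \<and> set c \<subseteq> bonds n a b \<and>
     (\<forall>j < length c. snd (c ! j) = fst (c ! (Suc j mod length c)))"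
proof (cases "c = []")
  case False
  have "(\<forall>j < length c. snd (c ! j) = fst (c ! (Suc j mod length c))) \<longleftrightarrow>
        (\<forall>j. Suc j < length c \<longrightarrow> snd (c ! j) = fst (c ! Suc j)) \<and> snd (last c) = fst (hd c)"
    (is "?cyclic \<longleftrightarrow> ?chain \<and> ?closed")
  proof
    assume cyclic: ?cyclic
    have "snd (c ! (length c - 1)) = fst (c ! 0)"
      using cyclic[rule_format, of "length c - 1"] False by simp
    then show "?chain \<and> ?closed"
      using cyclic False by (simp add: last_conv_nth hd_conv_nth)
  next
    assume chain_closed: "?chain \<and> ?closed"
    show ?cyclic
    proof (intro allI impI)
      fix j assume "j < length c"
      then consider "Suc j < length c" | "j = length c - 1" by linarith
      then show "snd (c ! j) = fst (c ! (Suc j mod length c))"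
        by cases (use chain_closed False in \<open>simp_all add: last_conv_nth hd_conv_nth\<close>)
    qed
  qed
  then show ?thesis using False by (simp add: is_circuit_def is_path_def)
qed (simp add: is_circuit_def is_path_def)

lemma is_circuit_rotate:
  assumes "is_circuit n a b c"
  shows "is_circuit n a b (rotate i c)"
proof -
  have cyclic: "\<forall>j < length c. snd (c ! j) = fst (c ! (Suc j mod length c))" and "c \<noteq> []"
    using assms by (simp_all add: is_circuit_iff_cyclic)
  have "snd (rotate i c ! j) = fst (rotate i c ! (Suc j mod length c))" if "j < length c" for j
  proof -
    have "(i + Suc j mod length c) mod length c = Suc ((i + j) mod length c) mod length c"
      by (simp add: mod_Suc_eq mod_add_right_eq)
    then show ?thesis
      using that cyclic[rule_format, of "(i + j) mod length c"] \<open>c \<noteq> []\<close> by (simp add: nth_rotate)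
  qed
  then show ?thesis using assms by (simp add: is_circuit_iff_cyclic)
qed

lemma b_count_rotate: "b_count n b (rotate i c) = b_count n b c"
proof -
  let ?j = "i mod length c"
  have "b_count n b c = b_count n b (take ?j c) + b_count n b (drop ?j c)"
    unfolding b_count_def
    by (subst append_take_drop_id[symmetric, of _ ?j]) (simp only: filter_append length_append)
  then show ?thesis by (simp add: rotate_drop_take b_count_def)
qed

lemma is_circuit_take_period:
  assumes "is_circuit n a b c" "rotate d c = c" "0 < d" "d \<le> length c"
  shows "is_circuit n a b (take d c)"
proof -
  have cyclic: "\<forall>j < length c. snd (c ! j) = fst (c ! (Suc j mod length c))"
    and "set c \<subseteq> bonds n a b" using assms(1) by (simp_all add: is_circuit_iff_cyclic)
  have "c \<noteq> []" using assms(3,4) by auto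
  then have "rotate d c ! 0 = c ! (d mod length c)"
    using nth_rotate[of 0 c d] by simp
  then have wrap: "c ! (d mod length c) = c ! 0"
    unfolding assms(2) ..
  have steps: "snd (take d c ! j) = fst (take d c ! (Suc j mod d))" if "j < d" for j
  proof (cases "Suc j < d")
    case True
    then have "j < length c" "Suc j mod length c = Suc j" "Suc j mod d = Suc j"
      using assms(4) by simp_all
    then show ?thesis using cyclic True by simp
  next
    case False
    then have "Suc j = d" using that by simp
    then have "snd (c ! j) = fst (c ! 0)"
      using cyclic[rule_format, of j] wrap assms(4) by simp
    then show ?thesis using \<open>Suc j = d\<close> by simp
  qed
  have "set (take d c) \<subseteq> bonds n a b"
    using set_take_subset \<open>set c \<subseteq> bonds n a b\<close> by (rule order_trans)
  moreover have len: "length (take d c) = d" using assms(4) by simp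
  moreover have "take d c \<noteq> []" using \<open>c \<noteq> []\<close> assms(3) by simp
  ultimately show ?thesis
    using steps by (simp add: is_circuit_iff_cyclic)
qed

lemma primitive_orbit_iff_exponent_eq_1:
  assumes "is_circuit n a b c"
  shows "primitive_orbit n a b (orbit c) \<longleftrightarrow> list_exponent c = 1"
proof
  assume prim: "primitive_orbit n a b (orbit c)"
  have "c \<noteq> []" using assms by (simp add: is_circuit_iff_cyclic)
  let ?p = "list_period c" and ?e = "list_exponent c"
  have "c = concat (replicate (length c div ?p) (take ?p c))"
    using \<open>c \<noteq> []\<close> by (intro rotate_eq_self_imp_concat_replicate list_period list_period_dvd_length)
  then have power: "orbit c = orbit (concat (replicate ?e (take ?p c)))"
    unfolding list_exponent_def by (rule arg_cong)
  have "?p \<le> length c" using \<open>c \<noteq> []\<close> by (simp add: dvd_imp_le list_period_dvd_length)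
  then have "is_circuit n a b (take ?p c)"
    using assms \<open>c \<noteq> []\<close> by (intro is_circuit_take_period list_period)
  then have "\<not> 1 < ?e" using prim power unfolding primitive_orbit_def by blast
  then show "?e = 1" using list_exponent_pos[OF \<open>c \<noteq> []\<close>] by linarith
next
  assume exponent: "list_exponent c = 1"
  show "primitive_orbit n a b (orbit c)"
    unfolding primitive_orbit_def
  proof (intro notI, elim exE conjE)
    fix c0 r assume "1 < r" "is_circuit n a b c0" and orbit: "orbit c = orbit (concat (replicate r c0))"
    then have "c0 \<noteq> []" by (simp add: is_circuit_iff_cyclic)
    obtain i where "c = rotate i (concat (replicate r c0))"
      using self_in_orbit[of c] unfolding orbit by (auto simp: orbit_def)
    then have "r dvd list_exponent c"
      using dvd_list_exponent_concat_replicate[of r c0] \<open>1 < r\<close> \<open>c0 \<noteq> []\<close>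
      by (simp add: list_exponent_rotate)
    then show False using exponent \<open>1 < r\<close> by simp
  qed
qed

definition circuits :: "nat \<Rightarrow> nat \<Rightarrow> nat \<Rightarrow> nat \<Rightarrow> nat \<Rightarrow> bond list set" where
  "circuits n a b l k = {c. is_circuit n a b c \<and> length c = l \<and> b_count n b c = k}"

lemma finite_bonds: "finite (bonds n a b)"
  unfolding bonds_def by (simp add: setcompr_eq_image)

lemma finite_circuits: "finite (circuits n a b l k)"
proof (rule finite_subset)
  show "circuits n a b l k \<subseteq> {c. set c \<subseteq> bonds n a b \<and> length c = l}"
    by (auto simp: circuits_def is_circuit_def is_path_def)
qed (rule finite_lists_length_eq[OF finite_bonds])

lemma prim_orbits_eq_orbits_of_circuits:
  "prim_orbits n a b l k = orbit ` {c \<in> circuits n a b l k. list_exponent c = 1}"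
  by (auto simp: prim_orbits_def circuits_def primitive_orbit_iff_exponent_eq_1)

lemma card_prim_orbits:
  "l * card (prim_orbits n a b l k) = card {c \<in> circuits n a b l k. list_exponent c = 1}"
  unfolding prim_orbits_eq_orbits_of_circuits
proof (rule card_orbits)
  show "finite {c \<in> circuits n a b l k. list_exponent c = 1}"
    using finite_circuits by simp
  fix c assume c: "c \<in> {c \<in> circuits n a b l k. list_exponent c = 1}"
  then show "c \<noteq> [] \<and> length c = l \<and> list_exponent c = 1"
    by (auto simp: circuits_def is_circuit_def is_path_def)
  show "orbit c \<subseteq> {c \<in> circuits n a b l k. list_exponent c = 1}"
    using c by (auto simp: orbit_def circuits_def is_circuit_rotate b_count_rotate list_exponent_rotate)
qed

section \<open>Circuits as walks along binary words\<close>

lemma mod_add_eq_self_iff: "(v + d) mod n = v mod n \<longleftrightarrow> n dvd d"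
  for v d n :: nat
  using mod_eq_dvd_iff_nat[of v "v + d" n] by simp

lemma add_mod_eq_self: "v < n \<Longrightarrow> n dvd d \<Longrightarrow> (v + d) mod n = v"
  for v d n :: nat
  using mod_add_eq_self_iff[of v d n] by simp

definition step_size :: "nat \<Rightarrow> nat \<Rightarrow> bool \<Rightarrow> nat" where
  "step_size a b x = (if x then b else a)"

definition displacement :: "nat \<Rightarrow> nat \<Rightarrow> bool list \<Rightarrow> nat" where
  "displacement a b w = sum_list (map (step_size a b) w)"

fun walk :: "nat \<Rightarrow> nat \<Rightarrow> nat \<Rightarrow> nat \<Rightarrow> bool list \<Rightarrow> bond list" where
  "walk n a b v [] = []"
| "walk n a b v (x # w) =
     (v, (v + step_size a b x) mod n) # walk n a b ((v + step_size a b x) mod n) w"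

lemma length_walk [simp]: "length (walk n a b v w) = length w"
  by (induction w arbitrary: v) auto

lemma walk_eq_Nil_iff [simp]: "walk n a b v w = [] \<longleftrightarrow> w = []"
  by (cases w) auto

lemma displacement_Nil [simp]: "displacement a b [] = 0"
  by (simp add: displacement_def)

lemma displacement_append [simp]:
  "displacement a b (u @ u') = displacement a b u + displacement a b u'"
  by (simp add: displacement_def)

lemma displacement_concat_replicate:
  "displacement a b (concat (replicate r u)) = r * displacement a b u"
  by (induction r) simp_all

lemma int_displacement:
  "int (displacement a b w) = int (length w) * int a + int (count_list w True) * (int b - int a)"
  by (induction w) (auto simp: displacement_def step_size_def algebra_simps)

lemma walk_append:
  assumes "v < n"
  shows "walk n a b v (u @ u') = walk n a b v u @ walk n a b ((v + displacement a b u) mod n) u'"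
  using assms
proof (induction u arbitrary: v)
  case (Cons x u)
  have "((v + step_size a b x) mod n + displacement a b u) mod n = (v + displacement a b (x # u)) mod n"
    by (simp add: displacement_def mod_add_left_eq add.assoc)
  then show ?case using Cons by simp
qed simp

lemma walk_concat_replicate:
  assumes "v < n" "n dvd displacement a b u"
  shows "walk n a b v (concat (replicate r u)) = concat (replicate r (walk n a b v u))"
proof (induction r)
  case (Suc r)
  have "(v + displacement a b u) mod n = v"
    using assms by (rule add_mod_eq_self)
  then show ?case using Suc assms(1) by (simp add: walk_append)
qed simp

lemma nth_walk:
  assumes "v < n" "i < length w"
  shows "walk n a b v w ! i =
    ((v + displacement a b (take i w)) mod n, (v + displacement a b (take (Suc i) w)) mod n)"
  using assms
proof (induction w arbitrary: v i)
  case (Cons x w)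
  show ?case
  proof (cases i)
    case (Suc j)
    have "((v + step_size a b x) mod n + displacement a b (take j' w)) mod n =
          (v + displacement a b (take (Suc j') (x # w))) mod n" for j'
      by (simp add: displacement_def mod_add_left_eq add.assoc)
    then show ?thesis using Cons Suc by simp
  qed (use Cons.prems in \<open>simp add: displacement_def\<close>)
qed simp

lemma is_circuit_walk:
  assumes "v < n" "w \<noteq> []" "n dvd displacement a b w"
  shows "is_circuit n a b (walk n a b v w)"
proof -
  let ?u = "\<lambda>i. (v + displacement a b (take i w)) mod n"
  have step: "?u (Suc i) = (?u i + step_size a b (w ! i)) mod n" if "i < length w" for i
    using that by (simp add: take_Suc_conv_app_nth displacement_def mod_add_left_eq add.assoc)
  have "walk n a b v w ! i \<in> bonds n a b" if "i < length w" for i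
  proof -
    have "?u i < n" using assms(1) by simp
    then show ?thesis
      using that step[OF that] assms(1) by (auto simp: nth_walk bonds_def step_size_def)
  qed
  then have "set (walk n a b v w) \<subseteq> bonds n a b"
    by (metis in_set_conv_nth length_walk subsetI)
  moreover have "snd (walk n a b v w ! j) = fst (walk n a b v w ! (Suc j mod length w))"
    if "j < length w" for j
  proof (cases "Suc j < length w")
    case False
    then have "Suc j = length w" using that by simp
    then show ?thesis using assms that by (simp add: nth_walk add_mod_eq_self)
  qed (use assms that in \<open>simp add: nth_walk\<close>)
  ultimately show ?thesis using assms(2) by (simp add: is_circuit_iff_cyclic)
qed

lemma is_b_bond_step:
  assumes "0 < a" "a < b" "b < n"
  shows "is_b_bond n b (v, (v + step_size a b x) mod n) = x"
proof (cases x)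
  case False
  have "(v + a) mod n \<noteq> (v + b) mod n"
  proof
    assume "(v + a) mod n = (v + b) mod n"
    then have "n dvd b - a"
      using mod_add_eq_self_iff[of "v + a" "b - a" n] assms(2) by simp
    then show False using assms by (simp add: nat_dvd_not_less)
  qed
  then show ?thesis using False by (simp add: is_b_bond_def step_size_def)
qed (simp add: is_b_bond_def step_size_def)

lemma map_is_b_bond_walk:
  assumes "0 < a" "a < b" "b < n"
  shows "map (is_b_bond n b) (walk n a b v w) = w"
  by (induction w arbitrary: v) (simp_all add: is_b_bond_step[OF assms])

lemma b_count_walk:
  assumes "0 < a" "a < b" "b < n"
  shows "b_count n b (walk n a b v w) = count_list w True"
proof -
  have "b_count n b (walk n a b v w) = count_list (map (is_b_bond n b) (walk n a b v w)) True"
    by (simp add: b_count_def count_list_eq_length_filter comp_def)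
  then show ?thesis by (simp add: map_is_b_bond_walk[OF assms])
qed

lemma bond_eq_step:
  assumes "e \<in> bonds n a b"
  shows "fst e < n" "e = (fst e, (fst e + step_size a b (is_b_bond n b e)) mod n)"
  using assms by (auto simp: bonds_def is_b_bond_def step_size_def)

lemma is_path_ConsD:
  assumes "is_path n a b (e # c)" "c \<noteq> []"
  shows "is_path n a b c" "snd e = fst (hd c)"
proof -
  have chain: "snd ((e # c) ! j) = fst ((e # c) ! Suc j)" if "Suc j < Suc (length c)" for j
    using assms(1) that by (simp add: is_path_def)
  show "snd e = fst (hd c)" using chain[of 0] assms(2) by (simp add: hd_conv_nth)
  have "snd (c ! j) = fst (c ! Suc j)" if "Suc j < length c" for j
    using chain[of "Suc j"] that by simp
  then show "is_path n a b c" using assms by (simp add: is_path_def)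
qed

lemma path_eq_walk:
  "is_path n a b c \<Longrightarrow> c = walk n a b (fst (hd c)) (map (is_b_bond n b) c)"
proof (induction c)
  case (Cons e c)
  have e: "e = (fst e, (fst e + step_size a b (is_b_bond n b e)) mod n)"
    using Cons.prems by (intro bond_eq_step) (simp add: is_path_def)
  show ?case
  proof (cases "c = []")
    case True
    then show ?thesis using e by simp
  next
    case False
    then have "c = walk n a b (snd e) (map (is_b_bond n b) c)"
      using Cons is_path_ConsD[OF Cons.prems] by simp
    then show ?thesis using e by (metis list.sel(1) list.simps(9) walk.simps(2) snd_conv)
  qed
qed simp

lemma rotate_walk_eq_self_iff:
  assumes "0 < a" "a < b" "b < n" "v < n"
    and "0 < d" "d < length w" "d dvd length w"
  shows "rotate d (walk n a b v w) = walk n a b v w \<longleftrightarrow>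
    rotate d w = w \<and> n dvd displacement a b (take d w)"
proof
  let ?c = "walk n a b v w"
  assume rot: "rotate d ?c = ?c"
  have "rotate d w = rotate d (map (is_b_bond n b) ?c)"
    using map_is_b_bond_walk[OF assms(1-3)] by simp
  also have "\<dots> = map (is_b_bond n b) (rotate d ?c)" by (rule rotate_map)
  also have "\<dots> = w" using rot map_is_b_bond_walk[OF assms(1-3)] by simp
  finally have "rotate d w = w" .
  have "w \<noteq> []" using assms(6) by auto
  then have "rotate d ?c ! 0 = ?c ! d" using nth_rotate[of 0 ?c d] assms(6) by simp
  then have "fst (?c ! d) = fst (?c ! 0)" using rot by simp
  then have "(v + displacement a b (take d w)) mod n = v mod n"
    using assms(6) \<open>w \<noteq> []\<close> nth_walk[OF assms(4), of d w] nth_walk[OF assms(4), of 0 w] by simp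
  then show "rotate d w = w \<and> n dvd displacement a b (take d w)"
    using \<open>rotate d w = w\<close> by (simp add: mod_add_eq_self_iff)
next
  assume "rotate d w = w \<and> n dvd displacement a b (take d w)"
  then have "w = concat (replicate (length w div d) (take d w))"
    and closed: "n dvd displacement a b (take d w)"
    using assms(5,7) rotate_eq_self_imp_concat_replicate by blast+
  then have "walk n a b v w = concat (replicate (length w div d) (walk n a b v (take d w)))"
    using walk_concat_replicate[OF assms(4) closed] by metis
  moreover have "length (walk n a b v (take d w)) = d" using assms(6) by simp
  ultimately show "rotate d (walk n a b v w) = walk n a b v w"
    using rotate_length_concat_replicate by metis
qed

lemma inj_on_walk:
  assumes "0 < a" "a < b" "b < n"
  shows "inj_on (\<lambda>(v, w). walk n a b v w) ({..<n} \<times> {w. w \<noteq> []})"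
proof (rule inj_onI, clarify)
  fix v w v' w' assume "v < n" "v' < n" "w \<noteq> []" "w' \<noteq> []"
    and eq: "walk n a b v w = walk n a b v' w'"
  show "v = v' \<and> w = w'"
  proof
    show "w = w'" using arg_cong[OF eq, of "map (is_b_bond n b)"] by (simp add: map_is_b_bond_walk[OF assms])
    show "v = v'"
      using arg_cong[OF eq, of "\<lambda>c. fst (c ! 0)"] \<open>v < n\<close> \<open>v' < n\<close> \<open>w \<noteq> []\<close> \<open>w' \<noteq> []\<close>
      by (simp add: nth_walk)
  qed
qed

lemma circuits_eq_walks:
  assumes "0 < a" "a < b" "b < n" "0 < l"
    and closing: "\<And>w. w \<in> words l k \<Longrightarrow> n dvd displacement a b w"
  shows "circuits n a b l k = (\<lambda>(v, w). walk n a b v w) ` ({..<n} \<times> words l k)"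
proof
  show "circuits n a b l k \<subseteq> (\<lambda>(v, w). walk n a b v w) ` ({..<n} \<times> words l k)"
  proof
    fix c assume c: "c \<in> circuits n a b l k"
    then have "is_path n a b c" by (simp add: circuits_def is_circuit_def)
    then have walk: "c = walk n a b (fst (hd c)) (map (is_b_bond n b) c)" by (rule path_eq_walk)
    have "hd c \<in> bonds n a b" using \<open>is_path n a b c\<close> by (auto simp: is_path_def)
    then have "fst (hd c) < n" by (rule bond_eq_step)
    moreover have "map (is_b_bond n b) c \<in> words l k"
      using c by (simp add: circuits_def words_def b_count_def count_list_eq_length_filter comp_def)
    ultimately show "c \<in> (\<lambda>(v, w). walk n a b v w) ` ({..<n} \<times> words l k)"
      using walk by (intro image_eqI[where x = "(fst (hd c), map (is_b_bond n b) c)"]) auto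
  qed
  show "(\<lambda>(v, w). walk n a b v w) ` ({..<n} \<times> words l k) \<subseteq> circuits n a b l k"
  proof clarify
    fix v w assume "v < n" "w \<in> words l k"
    then show "walk n a b v w \<in> circuits n a b l k"
      using assms(4) closing is_circuit_walk b_count_walk[OF assms(1-3)]
      by (auto simp: circuits_def words_def)
  qed
qed

lemma nat_dvd_iff_int_dvd_of_mult_eq:
  fixes t d n :: nat and \<omega> :: int
  assumes "int t * int d = \<omega> * int n" "0 < t" "0 < n"
  shows "n dvd d \<longleftrightarrow> int t dvd \<omega>"
  using assms int_dvd_int_iff by fastforce

lemma coprime_int_iff:
  "coprime (int e) (\<omega> :: int) \<longleftrightarrow> (\<forall>t. t dvd e \<and> int t dvd \<omega> \<longrightarrow> t = 1)"
  by (metis coprime_def coprime_nat_abs_right_iff dvd_nat_abs_iff nat_dvd_1_iff_1)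

lemma dvd_list_exponent_walk_iff:
  assumes "0 < a" "a < b" "b < n" "v < n" "w \<noteq> []"
    and closing: "int (displacement a b w) = \<omega> * int n"
  shows "t dvd list_exponent (walk n a b v w) \<longleftrightarrow> t dvd list_exponent w \<and> int t dvd \<omega>"
proof (cases "t dvd length w \<and> t \<noteq> 1")
  case False
  then consider "t = 1" | "\<not> t dvd length w" by blast
  then show ?thesis
  proof cases
    case 2
    then have "\<not> t dvd list_exponent w" "\<not> t dvd list_exponent (walk n a b v w)"
      using list_exponent_dvd_length[of w] list_exponent_dvd_length[of "walk n a b v w"]
      by (auto dest: dvd_trans)
    then show ?thesis by simp
  qed simp
next
  case True
  let ?d = "length w div t" and ?c = "walk n a b v w"
  obtain k where k: "length w = t * k" using True by blast
  then have "0 < k" "0 < t" using assms(5) by (auto intro: gr0I)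
  then have d: "0 < ?d" "?d < length w" "?d dvd length w" "length w div ?d = t"
    using k True by auto
  have "t dvd list_exponent ?c \<longleftrightarrow> rotate ?d ?c = ?c"
    using rotate_eq_self_iff_dvd_exponent[of ?c t] True assms(5) by simp
  also have "\<dots> \<longleftrightarrow> rotate ?d w = w \<and> n dvd displacement a b (take ?d w)"
    using assms(1-4) d(1-3) by (rule rotate_walk_eq_self_iff)
  also have "\<dots> \<longleftrightarrow> t dvd list_exponent w \<and> int t dvd \<omega>"
  proof -
    have "n dvd displacement a b (take ?d w) \<longleftrightarrow> int t dvd \<omega>" if "rotate ?d w = w"
    proof -
      have "w = concat (replicate t (take ?d w))"
        using rotate_eq_self_imp_concat_replicate[OF that] d by simp
      then have "displacement a b w = t * displacement a b (take ?d w)"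
        by (metis displacement_concat_replicate)
      then have "int t * int (displacement a b (take ?d w)) = \<omega> * int n"
        using closing by simp
      then show ?thesis
        using \<open>0 < t\<close> assms(4) by (intro nat_dvd_iff_int_dvd_of_mult_eq) auto
    qed
    then show ?thesis
      using rotate_eq_self_iff_dvd_exponent[of w t] True assms(5) by blast
  qed
  finally show ?thesis .
qed

lemma list_exponent_walk_eq_1_iff:
  assumes "0 < a" "a < b" "b < n" "v < n" "w \<noteq> []"
    and "int (displacement a b w) = \<omega> * int n"
  shows "list_exponent (walk n a b v w) = 1 \<longleftrightarrow> coprime (int (list_exponent w)) \<omega>"
proof -
  have "list_exponent (walk n a b v w) = 1 \<longleftrightarrow> (\<forall>t. t dvd list_exponent (walk n a b v w) \<longrightarrow> t = 1)"
    by (metis dvd_refl nat_dvd_1_iff_1)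
  also have "\<dots> \<longleftrightarrow> coprime (int (list_exponent w)) \<omega>"
    unfolding coprime_int_iff using dvd_list_exponent_walk_iff[OF assms] by simp
  finally show ?thesis .
qed

lemma card_aperiodic_circuits:
  fixes \<omega> :: int
  assumes "0 < a" "a < b" "b < n" "0 < l"
    and "int l * int a + int k * (int b - int a) = \<omega> * int n"
  shows "card {c \<in> circuits n a b l k. list_exponent c = 1} =
    n * card {w \<in> words l k. coprime (int (list_exponent w)) \<omega>}"
proof -
  let ?walk = "\<lambda>(v, w). walk n a b v w"
  have disp: "int (displacement a b w) = \<omega> * int n" if "w \<in> words l k" for w
    using that assms(5) by (simp add: words_def int_displacement)
  then have closing: "n dvd displacement a b w" if "w \<in> words l k" for w
    using that by (metis dvd_triv_right int_dvd_int_iff)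
  have nonempty: "w \<noteq> []" if "w \<in> words l k" for w
    using that assms(4) by (auto simp: words_def)
  have "{c \<in> ?walk ` ({..<n} \<times> words l k). list_exponent c = 1} =
      ?walk ` ({..<n} \<times> {w \<in> words l k. coprime (int (list_exponent w)) \<omega>})"
    using list_exponent_walk_eq_1_iff[OF assms(1-3) _ nonempty disp] by auto
  then have "{c \<in> circuits n a b l k. list_exponent c = 1} =
      ?walk ` ({..<n} \<times> {w \<in> words l k. coprime (int (list_exponent w)) \<omega>})"
    by (simp only: circuits_eq_walks[OF assms(1-4) closing])
  moreover have "inj_on ?walk ({..<n} \<times> {w \<in> words l k. coprime (int (list_exponent w)) \<omega>})"
    using nonempty by (intro inj_on_subset[OF inj_on_walk[OF assms(1-3)]]) auto
  ultimately show ?thesis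
    by (simp add: card_image card_cartesian_product)
qed

theorem mainTheorem16:
  fixes n a b l k :: nat and \<omega> :: int
  assumes "n \<ge> 2" and "0 < a" and "a < b" and "b < n"
    and "gcd n (gcd a b) = 1"
    and "l \<ge> 1" and "k \<le> l"
    and "int l * int a + int k * (int b - int a) = \<omega> * int n"
  shows "real (card (prim_orbits n a b l k)) =
    real n / real l *
      (\<Sum>q\<in>{q. 0 < q \<and> q dvd gcd l k \<and> coprime (int q) \<omega>}.
         \<Sum>m\<in>{m. m dvd (gcd l k div q)}.
           real_of_int (moebius_mu m) * real ((l div (q * m)) choose (k div (q * m))))"
proof -
  have "0 < l" using assms(6) by simp
  have "real l * real (card (prim_orbits n a b l k)) =
      real n * real (card {w \<in> words l k. coprime (int (list_exponent w)) \<omega>})"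
    using card_prim_orbits[of l n a b k] card_aperiodic_circuits[OF assms(2-4) \<open>0 < l\<close> assms(8)]
    by (metis of_nat_mult)
  then show ?thesis
    using card_words_coprime_list_exponent[OF \<open>0 < l\<close>, of k \<omega>] \<open>0 < l\<close>
    by (simp add: field_simps)
qed

end
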